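(* Let $n\ge 3$ and let $k=n \bmod 4$. Under optimal play, the Sign Game on the cycle graph $C_n$ results in: a draw if $k=0$; a win for Player P if $k=1$; a win for Player 2 if $k=2$; a win for Player N if $k=3$.
   Context: The Sign Game on a finite simple undirected graph $G$: two players, Player P and Player N, alternate turns; the player who moves first is called Player 1 and the other Player 2 (either of P, N may be Player 1). On a turn, a player chooses a vertex of $G$ not yet assigned a value and assigns it $+1$ or $-1$. The game ends when every vertex has been assigned. The score of an edge $uv$ is the product of the values of $u$ and $v$, and the score $s(G)$ of the game is the sum of the scores of all edges. Player P wins if $s(G)>0$, Player N wins if $s(G)<0$, and the game is a draw if $s(G)=0$. "Under optimal play" means both players play optimally, each with primary goal of winning and secondary goal of at least drawing; the result is the outcome of this finite perfect-information game under such play, regardless of which of P, N moves first unless the result is stated in terms of Player 1/Player 2. The cycle graph $C_n$ ($n\ge 3$) has vertices $v_1,\dots,v_n$ and edges $v_iv_{i+1}$ for $1\le i\le n-1$ together with $v_nv_1$. *)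

theory Defs
  imports Main
begin

text \<open>An assignment is a function
  f :: nat \<Rightarrow> int with f v \<in> {1,-1} for assigned vertices and f v = 0 for
  unassigned ones.\<close>

definition sg_score :: "nat set set \<Rightarrow> (nat \<Rightarrow> int) \<Rightarrow> int" where
  "sg_score E f = (\<Sum>e\<in>E. \<Prod>v\<in>e. f v)"

text \<open>Minimax value of the game with m moves remaining; pturn = True means Player P is
  to move. Player P maximises and Player N minimises the outcome sgn(score)
  (1 = P wins, 0 = draw, -1 = N wins), which encodes "win first, draw second".\<close>

primrec sg_val :: "nat \<Rightarrow> nat set \<Rightarrow> nat set set \<Rightarrow> bool \<Rightarrow> (nat \<Rightarrow> int) \<Rightarrow> int" where
  "sg_val 0 V E pturn f = sgn (sg_score E f)"
| "sg_val (Suc m) V E pturn f =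
     (let opts = {sg_val m V E (\<not> pturn) (f(v := s)) | v s. v \<in> V \<and> f v = 0 \<and> s \<in> {1, -1}}
      in if pturn then Max opts else Min opts)"

definition sign_game_outcome :: "nat set \<Rightarrow> nat set set \<Rightarrow> bool \<Rightarrow> int" where
  "sign_game_outcome V E p_first = sg_val (card V) V E p_first (\<lambda>_. 0)"

definition cycle_vertices :: "nat \<Rightarrow> nat set" where
  "cycle_vertices n = {0..<n}"

definition cycle_edges :: "nat \<Rightarrow> nat set set" where
  "cycle_edges n = {{i, (i + 1) mod n} | i. i < n}"

end

theory Submission
  imports Defs
begin

(* A player who answers every opponent move by assigning an unassigned neighbour of an
  assigned vertex, copying its sign (Player P) or its negation (Player N), gains one
  agreeing (resp. disagreeing) edge per answer; on a connected graph such a neighbour exists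
  until the game ends. On C_n the score of a complete assignment with a agreeing and
  d disagreeing edges is 2a - n = n - 2d, and it is congruent to n modulo 4. The first player
  gets (n - 1) div 2 answers and the second n div 2, which together with the congruence fixes
  the sign of the score in each residue class of n modulo 4. *)

(* Outcome x is at least as good as c for player p; p = True is Player P, the maximiser. *)
definition secures :: "bool \<Rightarrow> int \<Rightarrow> int \<Rightarrow> bool" where
  "secures p c x \<longleftrightarrow> (if p then c \<le> x else x \<le> c)"

lemma finite_sg_val_choices:
  "finite V \<Longrightarrow> finite {sg_val m V E q (f(v := s)) | v s. v \<in> V \<and> f v = 0 \<and> s \<in> {1, -1}}"
  by (rule finite_subset[of _ "(\<lambda>(v, s). sg_val m V E q (f(v := s))) ` (V \<times> {1, -1})"]) auto

lemma sg_val_Suc_own_move: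
  assumes "finite V" "v \<in> V" "f v = 0" "s \<in> {1, -1}"
    and "secures p c (sg_val m V E (\<not> p) (f(v := s)))"
  shows "secures p c (sg_val (Suc m) V E p f)"
proof -
  let ?O = "{sg_val m V E (\<not> p) (f(v := s)) | v s. v \<in> V \<and> f v = 0 \<and> s \<in> {1, -1}}"
  have fin: "finite ?O" using assms(1) by (rule finite_sg_val_choices)
  have "sg_val m V E (\<not> p) (f(v := s)) \<in> ?O" using assms by blast
  then have "sg_val m V E (\<not> p) (f(v := s)) \<le> Max ?O" "Min ?O \<le> sg_val m V E (\<not> p) (f(v := s))"
    using fin by (auto intro: Max_ge Min_le)
  then show ?thesis using assms(5) by (auto simp: secures_def Let_def)
qed

lemma sg_val_Suc_opponent_move:
  assumes "finite V" "v \<in> V" "f v = 0"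
    and "\<And>v s. v \<in> V \<Longrightarrow> f v = 0 \<Longrightarrow> s \<in> {1, -1} \<Longrightarrow> secures p c (sg_val m V E p (f(v := s)))"
  shows "secures p c (sg_val (Suc m) V E (\<not> p) f)"
proof -
  let ?O = "{sg_val m V E p (f(v := s)) | v s. v \<in> V \<and> f v = 0 \<and> s \<in> {1, -1}}"
  have fin: "finite ?O" using assms(1) by (rule finite_sg_val_choices)
  have ne: "?O \<noteq> {}" using assms by blast
  have all: "secures p c x" if "x \<in> ?O" for x using assms(4) that by blast
  show ?thesis
  proof (cases p)
    case True
    have "c \<le> Min ?O"
      using Min.boundedI[OF fin ne] all True by (simp add: secures_def)
    then show ?thesis using True by (simp add: secures_def Let_def)
  next
    case False
    have "Max ?O \<le> c"
      using Max.boundedI[OF fin ne] all False by (simp add: secures_def)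
    then show ?thesis using False by (simp add: secures_def Let_def)
  qed
qed

definition partial_assignment :: "nat set \<Rightarrow> (nat \<Rightarrow> int) \<Rightarrow> nat \<Rightarrow> bool" where
  "partial_assignment V f m \<longleftrightarrow> f ` V \<subseteq> {-1, 0, 1} \<and> card {v \<in> V. f v = 0} = m"

lemma partial_assignment_update:
  assumes "finite V" "partial_assignment V f (Suc m)" "v \<in> V" "f v = 0" "s \<in> {1, -1}"
  shows "partial_assignment V (f(v := s)) m"
proof -
  have "{u \<in> V. (f(v := s)) u = 0} = {u \<in> V. f u = 0} - {v}" using assms(5) by auto
  then show ?thesis using assms by (auto simp: partial_assignment_def)
qed

lemma partial_assignment_SucE:
  assumes "partial_assignment V f (Suc m)"
  obtains v where "v \<in> V" "f v = 0"
proof -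
  have "card {v \<in> V. f v = 0} = Suc m" using assms unfolding partial_assignment_def by simp
  then have "{v \<in> V. f v = 0} \<noteq> {}" by (metis card_gt_0_iff zero_less_Suc)
  then show ?thesis using that by blast
qed

lemma partial_assignment_0:
  "finite V \<Longrightarrow> partial_assignment V f 0 \<Longrightarrow> \<forall>v\<in>V. f v \<in> {1, -1}"
  unfolding partial_assignment_def by auto

lemma sg_val_range:
  "finite V \<Longrightarrow> partial_assignment V f m \<Longrightarrow> sg_val m V E q f \<in> {-1, 0, 1}"
proof (induction m arbitrary: f q)
  case 0
  then show ?case by (simp add: sgn_if)
next
  case (Suc m)
  let ?O = "{sg_val m V E (\<not> q) (f(v := s)) | v s. v \<in> V \<and> f v = 0 \<and> s \<in> {1, -1}}"
  obtain v where "v \<in> V" "f v = 0" using Suc.prems(2) by (rule partial_assignment_SucE)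
  then have "?O \<noteq> {}" by blast
  moreover have "finite ?O" using Suc.prems(1) by (rule finite_sg_val_choices)
  moreover have "?O \<subseteq> {-1, 0, 1}"
    using Suc.IH[OF Suc.prems(1) partial_assignment_update[OF Suc.prems]] by blast
  ultimately have "Max ?O \<in> {-1, 0, 1}" "Min ?O \<in> {-1, 0, 1}" by (auto dest: Max_in Min_in)
  then show ?case by (cases q) (simp_all add: Let_def)
qed

lemma sign_game_outcome_range:
  "finite V \<Longrightarrow> sign_game_outcome V E pf \<in> {-1, 0, 1}"
  unfolding sign_game_outcome_def
  by (rule sg_val_range) (auto simp: partial_assignment_def)

definition edge_count :: "nat set set \<Rightarrow> (nat \<Rightarrow> int) \<Rightarrow> int \<Rightarrow> nat" where
  "edge_count E f t = card {e \<in> E. (\<Prod>v\<in>e. f v) = t}"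

lemma edges_scoring_subset_update:
  fixes f :: "nat \<Rightarrow> int"
  assumes "f w = 0" "t \<noteq> 0"
  shows "{e \<in> E. (\<Prod>v\<in>e. f v) = t} \<subseteq> {e \<in> E. (\<Prod>v\<in>e. (f(w := s)) v) = t}"
proof -
  have "(\<Prod>v\<in>e. (f(w := s)) v) = (\<Prod>v\<in>e. f v)" if "(\<Prod>v\<in>e. f v) = t" for e
  proof (cases "finite e")
    case True
    then have "w \<notin> e" using that assms by (auto simp: prod_zero_iff)
    then show ?thesis by (auto intro: prod.cong)
  qed simp
  then show ?thesis by auto
qed

lemma edge_count_mono_update:
  "finite E \<Longrightarrow> f w = 0 \<Longrightarrow> t \<noteq> 0 \<Longrightarrow> edge_count E f t \<le> edge_count E (f(w := s)) t"
  unfolding edge_count_def by (intro card_mono edges_scoring_subset_update) auto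

lemma edge_count_copy_move:
  assumes "finite E" "{a, b} \<in> E" "f a \<in> {1, -1}" "f b = 0" "t \<in> {1, -1}"
  shows "edge_count E f t < edge_count E (f(b := t * f a)) t"
  unfolding edge_count_def
proof (rule psubset_card_mono)
  let ?g = "f(b := t * f a)"
  have "a \<noteq> b" using assms(3,4) by auto
  then have "{a, b} \<in> {e \<in> E. (\<Prod>v\<in>e. ?g v) = t}" using assms by auto
  moreover have "{a, b} \<notin> {e \<in> E. (\<Prod>v\<in>e. f v) = t}" using \<open>a \<noteq> b\<close> assms(4,5) by auto
  moreover have "{e \<in> E. (\<Prod>v\<in>e. f v) = t} \<subseteq> {e \<in> E. (\<Prod>v\<in>e. ?g v) = t}"
    using assms(4,5) by (intro edges_scoring_subset_update) auto
  ultimately show "{e \<in> E. (\<Prod>v\<in>e. f v) = t} \<subset> {e \<in> E. (\<Prod>v\<in>e. ?g v) = t}" by blast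
qed (use assms(1) in simp)

lemma prod_in_pm_one:
  fixes g :: "'a \<Rightarrow> int"
  assumes "\<forall>v\<in>e. g v \<in> {1, -1}"
  shows "(\<Prod>v\<in>e. g v) \<in> {1, -1}"
  using assms by (induction e rule: infinite_finite_induct) auto

lemma sg_score_full_assignment:
  fixes g :: "nat \<Rightarrow> int"
  assumes "finite E" "\<forall>e\<in>E. (\<Prod>v\<in>e. g v) \<in> {1, -1}" "t \<in> {1, -1}"
  shows "t * sg_score E g = 2 * int (edge_count E g t) - int (card E)"
proof -
  let ?A = "{e \<in> E. (\<Prod>v\<in>e. g v) = t}"
  have A: "?A \<subseteq> E" "finite ?A" using assms(1) by auto
  have "sg_score E g = (\<Sum>e\<in>E - ?A. \<Prod>v\<in>e. g v) + (\<Sum>e\<in>?A. \<Prod>v\<in>e. g v)"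
    unfolding sg_score_def using sum.subset_diff[OF A(1) assms(1)] .
  moreover have "(\<Sum>e\<in>E - ?A. \<Prod>v\<in>e. g v) = - t * int (card (E - ?A))"
    using assms(2,3) by (subst sum.cong[of _ _ _ "\<lambda>_. - t"]) auto
  moreover have "(\<Sum>e\<in>?A. \<Prod>v\<in>e. g v) = t * int (card ?A)" by simp
  moreover have "int (card (E - ?A)) = int (card E) - int (card ?A)"
    using A assms(1) by (simp add: card_Diff_subset card_mono)
  ultimately have "sg_score E g = t * (2 * int (card ?A) - int (card E))"
    by (simp add: algebra_simps)
  moreover have "t * t = 1" using assms(3) by auto
  ultimately show ?thesis unfolding edge_count_def by (metis mult.assoc mult_1)
qed

definition connected_graph :: "nat set \<Rightarrow> nat set set \<Rightarrow> bool" where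
  "connected_graph V E \<longleftrightarrow>
     (\<forall>S \<subseteq> V. S \<noteq> {} \<longrightarrow> S \<noteq> V \<longrightarrow> (\<exists>a\<in>S. \<exists>b\<in>V - S. {a, b} \<in> E))"

lemma connected_graphD:
  "connected_graph V E \<Longrightarrow> S \<subseteq> V \<Longrightarrow> S \<noteq> {} \<Longrightarrow> S \<noteq> V \<Longrightarrow> \<exists>a\<in>S. \<exists>b\<in>V - S. {a, b} \<in> E"
  unfolding connected_graph_def by blast

lemma connected_graph_frontier_edge:
  assumes "connected_graph V E" "w \<in> V" "f w \<noteq> 0" "u \<in> V" "f u = 0"
  obtains a b where "a \<in> V" "f a \<noteq> 0" "b \<in> V" "f b = 0" "{a, b} \<in> E"
proof -
  let ?S = "{v \<in> V. f v \<noteq> 0}"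
  have "?S \<noteq> {}" "?S \<noteq> V" using assms(2-5) by auto
  moreover have "?S \<subseteq> V" by blast
  ultimately have "\<exists>a\<in>?S. \<exists>b\<in>V - ?S. {a, b} \<in> E"
    using assms(1) by (intro connected_graphD) auto
  then show ?thesis using that by blast
qed

lemma copying_reply:
  fixes f :: "nat \<Rightarrow> int"
  assumes "finite V" "finite E" "connected_graph V E" "t \<in> {1, -1}"
    and "partial_assignment V f (Suc m)" "w \<in> V" "f w \<noteq> 0"
  obtains b r where "b \<in> V" "f b = 0" "r \<in> {1, -1}" "partial_assignment V (f(b := r)) m"
    "edge_count E f t < edge_count E (f(b := r)) t"
proof -
  obtain u where u: "u \<in> V" "f u = 0" using assms(5) by (rule partial_assignment_SucE)
  obtain a b where ab: "a \<in> V" "f a \<noteq> 0" "b \<in> V" "f b = 0" "{a, b} \<in> E"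
    using connected_graph_frontier_edge[OF assms(3,6,7) u] .
  have fa: "f a \<in> {1, -1}" using ab(1,2) assms(5) unfolding partial_assignment_def by auto
  then have r: "t * f a \<in> {1, -1}" using assms(4) by auto
  show ?thesis
  proof (rule that[OF ab(3,4) r])
    show "partial_assignment V (f(b := t * f a)) m"
      using partial_assignment_update[OF assms(1,5) ab(3,4) r] .
    show "edge_count E f t < edge_count E (f(b := t * f a)) t"
      using edge_count_copy_move[OF assms(2) ab(5) fa ab(4) assms(4)] .
  qed
qed

(* Opponent to move with m vertices left: player p still gets m div 2 answers. *)
lemma copying_strategy_secures:
  fixes f :: "nat \<Rightarrow> int"
  assumes "finite V" "finite E" "connected_graph V E" "t \<in> {1, -1}"
    and full_secures: "\<And>g. \<forall>v\<in>V. g v \<in> {1, -1} \<Longrightarrow> K \<le> edge_count E g t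
      \<Longrightarrow> secures p c (sgn (sg_score E g))"
  shows "partial_assignment V f m \<Longrightarrow> K \<le> edge_count E f t + m div 2
    \<Longrightarrow> secures p c (sg_val m V E (\<not> p) f)"
proof (induction m arbitrary: f rule: less_induct)
  case (less m)
  have final: "secures p c (sg_val 0 V E q g)"
    if "partial_assignment V g 0" "K \<le> edge_count E g t" for g q
    using full_secures partial_assignment_0[OF assms(1) that(1)] that(2) by simp
  show ?case
  proof (cases m)
    case 0
    then show ?thesis using final less.prems by simp
  next
    case (Suc m')
    obtain u where u: "u \<in> V" "f u = 0"
      using less.prems(1) Suc by (auto elim: partial_assignment_SucE)
    show ?thesis unfolding Suc
    proof (rule sg_val_Suc_opponent_move[where f = f, OF assms(1) u])
      fix w and s :: int assume w: "w \<in> V" "f w = 0" and s: "s \<in> {1, -1}"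
      let ?f = "f(w := s)"
      have f_state: "partial_assignment V ?f m'"
        using partial_assignment_update[OF assms(1) less.prems(1)[unfolded Suc] w s] .
      have f_count: "edge_count E f t \<le> edge_count E ?f t"
        using edge_count_mono_update[where f = f, OF assms(2) w(2)] assms(4) by auto
      show "secures p c (sg_val m' V E p ?f)"
      proof (cases m')
        case 0
        then show ?thesis using final f_state f_count less.prems(2) Suc by simp
      next
        case (Suc m'')
        have "?f w \<noteq> 0" using s by auto
        then obtain b r where b: "b \<in> V" "?f b = 0" "r \<in> {1, -1}"
          and g_state: "partial_assignment V (?f(b := r)) m''"
          and gain: "edge_count E ?f t < edge_count E (?f(b := r)) t"
          using copying_reply[OF assms(1-4) f_state[unfolded Suc] w(1)] by blast
        have "m'' < m" using Suc \<open>m = Suc m'\<close> by simp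
        moreover have "K \<le> edge_count E (?f(b := r)) t + m'' div 2"
          using less.prems(2) f_count gain \<open>m = Suc m'\<close> Suc by simp
        ultimately have "secures p c (sg_val m'' V E (\<not> p) (?f(b := r)))"
          using less.IH g_state by blast
        then show ?thesis
          unfolding Suc using sg_val_Suc_own_move[where f = "?f", OF assms(1) b] by simp
      qed
    qed
  qed
qed

lemma sign_game_outcome_secures:
  assumes "finite V" "V \<noteq> {}" "finite E" "connected_graph V E" "t \<in> {1, -1}"
    and full_secures: "\<And>g. \<forall>v\<in>V. g v \<in> {1, -1} \<Longrightarrow> K \<le> edge_count E g t
      \<Longrightarrow> secures p c (sgn (sg_score E g))"
    and replies: "K \<le> (if pf = p then (card V - 1) div 2 else card V div 2)"
  shows "secures p c (sign_game_outcome V E pf)"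
proof -
  have strategy: "secures p c (sg_val m V E (\<not> p) f)"
    if "partial_assignment V f m" "K \<le> edge_count E f t + m div 2" for f m
    using copying_strategy_secures[OF assms(1,3-5) _ that] full_secures by blast
  have empty: "partial_assignment V (\<lambda>_. 0) (card V)"
    unfolding partial_assignment_def by auto
  show ?thesis
  proof (cases "pf = p")
    case True
    obtain v where v: "v \<in> V" using assms(2) by blast
    obtain k where k: "card V = Suc k" using assms(1,2) by (metis card_0_eq not0_implies_Suc)
    have "partial_assignment V ((\<lambda>_. 0)(v := 1)) k"
      using partial_assignment_update[OF assms(1) empty[unfolded k] v] by simp
    then have "secures p c (sg_val k V E (\<not> p) ((\<lambda>_. 0)(v := 1)))"
      using strategy replies True k by simp
    then have "secures p c (sg_val (Suc k) V E p (\<lambda>_. 0))"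
      using sg_val_Suc_own_move[where f = "\<lambda>_. 0" and s = 1, OF assms(1) v] by simp
    then show ?thesis using True k unfolding sign_game_outcome_def by simp
  next
    case False
    then have "pf = (\<not> p)" by blast
    then show ?thesis
      using strategy[OF empty] replies False unfolding sign_game_outcome_def by simp
  qed
qed

lemma cycle_edges_eq_image: "cycle_edges n = (\<lambda>i. {i, (i + 1) mod n}) ` {..<n}"
  unfolding cycle_edges_def by auto

lemma inj_on_cycle_edge:
  fixes n :: nat
  assumes "n \<ge> 3"
  shows "inj_on (\<lambda>i. {i, (i + 1) mod n}) {..<n}"
proof
  fix i j assume ij: "i \<in> {..<n}" "j \<in> {..<n}" "{i, (i + 1) mod n} = {j, (j + 1) mod n}"
  show "i = j"
  proof (rule ccontr)
    assume "i \<noteq> j"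
    then have j: "j = (i + 1) mod n" and i: "i = (j + 1) mod n"
      using ij(3) by (auto simp: doubleton_eq_iff)
    have "i mod n = (j + 1) mod n" using i ij(1) by simp
    also have "\<dots> = (i + 2) mod n" unfolding j by (simp add: mod_Suc_eq)
    finally have "(i + 2) mod n = i mod n" ..
    then have "n dvd 2" using mod_eq_dvd_iff_nat[of i "i + 2" n] by simp
    then show False using assms by (auto dest: dvd_imp_le)
  qed
qed

lemma card_cycle_edges: "n \<ge> 3 \<Longrightarrow> card (cycle_edges n) = n"
  using card_image[OF inj_on_cycle_edge] unfolding cycle_edges_eq_image by simp

lemma sg_score_cycle:
  assumes "n \<ge> 3"
  shows "sg_score (cycle_edges n) f = (\<Sum>i<n. f i * f ((i + 1) mod n))"
proof -
  have "sg_score (cycle_edges n) f = (\<Sum>i<n. \<Prod>v\<in>{i, (i + 1) mod n}. f v)"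
    unfolding sg_score_def cycle_edges_eq_image sum.reindex[OF inj_on_cycle_edge[OF assms]]
    by simp
  also have "\<dots> = (\<Sum>i<n. f i * f ((i + 1) mod n))"
  proof (rule sum.cong)
    fix i assume "i \<in> {..<n}"
    then have "i \<noteq> (i + 1) mod n" using assms by (cases "i + 1 = n") auto
    then show "(\<Prod>v\<in>{i, (i + 1) mod n}. f v) = f i * f ((i + 1) mod n)" by simp
  qed simp
  finally show ?thesis .
qed

lemma sum_rotate_mod:
  fixes h :: "nat \<Rightarrow> 'a::comm_monoid_add"
  shows "(\<Sum>i<n. h ((i + 1) mod n)) = (\<Sum>i<n. h i)"
proof (cases n)
  case (Suc m)
  have "(\<Sum>i<Suc m. h ((i + 1) mod Suc m)) = (\<Sum>i<m. h ((i + 1) mod Suc m)) + h 0"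
    by simp
  also have "(\<Sum>i<m. h ((i + 1) mod Suc m)) = (\<Sum>i<m. h (Suc i))"
    by (rule sum.cong) auto
  also have "(\<Sum>i<m. h (Suc i)) + h 0 = (\<Sum>i<Suc m. h i)"
    by (subst sum.lessThan_Suc_shift) (simp add: add.commute)
  finally show ?thesis using Suc by simp
qed simp

lemma cycle_score_mod_4:
  assumes "n \<ge> 3" "\<forall>v\<in>cycle_vertices n. g v \<in> {1, -1}"
  shows "4 dvd sg_score (cycle_edges n) g - int n"
proof -
  let ?y = "\<lambda>i. g ((i + 1) mod n)"
  \<comment> \<open>For x, y = \<plusminus>1 both (1 - x) (1 - y) and 2 (x - 1) are multiples of 4, and summed
    around the cycle they give the score minus n.\<close>
  have pm: "g i \<in> {1, -1}" "?y i \<in> {1, -1}" if "i < n" for i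
    using assms that unfolding cycle_vertices_def by auto
  have "(\<Sum>i<n. (1 - g i) * (1 - ?y i) + 2 * (g i - 1))
      = (\<Sum>i<n. g i * ?y i - 1) + ((\<Sum>i<n. g i) - (\<Sum>i<n. ?y i))"
    by (simp add: sum.distrib sum_subtractf algebra_simps)
  also have "\<dots> = sg_score (cycle_edges n) g - int n"
    using sum_rotate_mod[of g n] by (simp add: sum_subtractf sg_score_cycle[OF assms(1)])
  finally have "sg_score (cycle_edges n) g - int n
      = (\<Sum>i<n. (1 - g i) * (1 - ?y i) + 2 * (g i - 1))" ..
  also have "4 dvd \<dots>"
  proof (rule dvd_sum)
    fix i assume "i \<in> {..<n}"
    then have "g i \<in> {1, -1}" "?y i \<in> {1, -1}" using pm by auto
    then show "4 dvd (1 - g i) * (1 - ?y i) + 2 * (g i - 1)" by auto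
  qed
  finally show ?thesis .
qed

lemma connected_cycle: "connected_graph (cycle_vertices n) (cycle_edges n)"
  unfolding connected_graph_def
proof (intro allI impI)
  fix S assume S: "S \<subseteq> cycle_vertices n" "S \<noteq> {}" "S \<noteq> cycle_vertices n"
  show "\<exists>a\<in>S. \<exists>b\<in>cycle_vertices n - S. {a, b} \<in> cycle_edges n"
  proof (rule ccontr)
    assume "\<not> ?thesis"
    then have closed: "(a + 1) mod n \<in> S" if "a \<in> S" for a
      using that S(1) unfolding cycle_vertices_def cycle_edges_def by fastforce
    obtain v where v: "v \<in> S" using S(2) by blast
    have reach: "(v + k) mod n \<in> S" for k
    proof (induction k)
      case 0
      then show ?case using v S(1) unfolding cycle_vertices_def by auto
    next
      case (Suc k)
      then show ?case using closed[of "(v + k) mod n"] by (simp add: mod_Suc_eq)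
    qed
    have "cycle_vertices n \<subseteq> S"
    proof
      fix u assume "u \<in> cycle_vertices n"
      then have "u = (v + (n - v + u)) mod n" using v S(1) unfolding cycle_vertices_def by auto
      then show "u \<in> S" by (metis reach)
    qed
    then show False using S by blast
  qed
qed

lemma nonneg_if_dvd_greater_neg: "(d::int) dvd x \<Longrightarrow> - d < x \<Longrightarrow> 0 \<le> x"
  by (smt (verit) dvd_minus_iff zdvd_imp_le)

lemma cycle_outcome_secures:
  fixes b :: int
  assumes "n \<ge> 3" and t: "t = (if p then 1 else -1)"
    and "4 dvd b - int n"
    and "t * b < 2 * int (if pf = p then (n - 1) div 2 else n div 2) - int n + 4"
  shows "secures p (sgn b) (sign_game_outcome (cycle_vertices n) (cycle_edges n) pf)"
proof (rule sign_game_outcome_secures[where K = "if pf = p then (n - 1) div 2 else n div 2"])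
  show "finite (cycle_vertices n)" "cycle_vertices n \<noteq> {}"
    using assms(1) unfolding cycle_vertices_def by auto
  show "finite (cycle_edges n)" unfolding cycle_edges_eq_image by simp
  show "connected_graph (cycle_vertices n) (cycle_edges n)" by (rule connected_cycle)
  show "t \<in> {1, -1}" using t by simp
  show "(if pf = p then (n - 1) div 2 else n div 2)
    \<le> (if pf = p then (card (cycle_vertices n) - 1) div 2 else card (cycle_vertices n) div 2)"
    unfolding cycle_vertices_def by simp
  fix g assume full: "\<forall>v\<in>cycle_vertices n. g v \<in> {1, -1}"
    and replies: "(if pf = p then (n - 1) div 2 else n div 2) \<le> edge_count (cycle_edges n) g t"
  let ?s = "sg_score (cycle_edges n) g"
  have "(\<Prod>v\<in>e. g v) \<in> {1, -1}" if "e \<in> cycle_edges n" for e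
  proof (rule prod_in_pm_one)
    have "e \<subseteq> cycle_vertices n"
      using that assms(1) unfolding cycle_edges_def cycle_vertices_def by auto
    then show "\<forall>v\<in>e. g v \<in> {1, -1}" using full by blast
  qed
  then have "t * ?s = 2 * int (edge_count (cycle_edges n) g t) - int n"
    using sg_score_full_assignment[OF _ _ \<open>t \<in> {1, -1}\<close>] card_cycle_edges[OF assms(1)]
      \<open>finite (cycle_edges n)\<close> by simp
  moreover have "4 dvd t * ?s - t * b"
  proof -
    have "4 dvd (?s - int n) - (b - int n)"
      using cycle_score_mod_4[OF assms(1) full] assms(3) by (rule dvd_diff)
    then have "4 dvd t * ((?s - int n) - (b - int n))" by (rule dvd_mult)
    then show ?thesis by (simp add: algebra_simps)
  qed
  ultimately have "t * b \<le> t * ?s"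
    using nonneg_if_dvd_greater_neg[of 4 "t * ?s - t * b"] replies assms(4) by simp
  then show "secures p (sgn b) (sgn ?s)"
    using t by (cases p) (auto simp: secures_def sgn_if)
qed

lemma cycle_outcome_lower_bound:
  assumes "n \<ge> 3" "4 dvd b - int n"
    and "b < 2 * int (if pf then (n - 1) div 2 else n div 2) - int n + 4"
  shows "sgn b \<le> sign_game_outcome (cycle_vertices n) (cycle_edges n) pf"
  using cycle_outcome_secures[of n 1 True b pf] assms by (simp add: secures_def)

lemma cycle_outcome_upper_bound:
  assumes "n \<ge> 3" "4 dvd b - int n"
    and "- b < 2 * int (if pf then n div 2 else (n - 1) div 2) - int n + 4"
  shows "sign_game_outcome (cycle_vertices n) (cycle_edges n) pf \<le> sgn b"
  using cycle_outcome_secures[of n "-1" False b pf] assms by (cases pf) (simp_all add: secures_def)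

theorem theorem6:
  fixes n :: nat
  assumes "n \<ge> 3"
  shows "(n mod 4 = 0 \<longrightarrow> (\<forall>pf. sign_game_outcome (cycle_vertices n) (cycle_edges n) pf = 0))
       \<and> (n mod 4 = 1 \<longrightarrow> (\<forall>pf. sign_game_outcome (cycle_vertices n) (cycle_edges n) pf = 1))
       \<and> (n mod 4 = 2 \<longrightarrow> (\<forall>pf. sign_game_outcome (cycle_vertices n) (cycle_edges n) pf
                                 = (if pf then -1 else 1)))
       \<and> (n mod 4 = 3 \<longrightarrow> (\<forall>pf. sign_game_outcome (cycle_vertices n) (cycle_edges n) pf = -1))"
proof -
  let ?O = "sign_game_outcome (cycle_vertices n) (cycle_edges n)"
  note lower = cycle_outcome_lower_bound[OF assms] and upper = cycle_outcome_upper_bound[OF assms]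
  have range: "?O pf \<in> {-1, 0, 1}" for pf
    unfolding cycle_vertices_def by (rule sign_game_outcome_range) simp
  show ?thesis
  proof (intro conjI impI allI)
    fix pf assume "n mod 4 = 0"
    then have "4 dvd 0 - int n" "0 < 2 * int ((n - 1) div 2) - int n + 4" using assms by presburger+
    then show "?O pf = 0" using lower[of 0 pf] upper[of 0 pf] by (cases pf) auto
  next
    fix pf assume "n mod 4 = 1"
    then have "4 dvd 1 - int n" "1 < 2 * int ((n - 1) div 2) - int n + 4"
      "1 < 2 * int (n div 2) - int n + 4" by presburger+
    then show "?O pf = 1" using lower[of 1 pf] range[of pf] by (cases pf) auto
  next
    fix pf assume "n mod 4 = 2"
    then have "4 dvd 2 - int n" "4 dvd - 2 - int n" "2 < 2 * int (n div 2) - int n + 4"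
      by presburger+
    then show "?O pf = (if pf then -1 else 1)"
      using lower[of 2 False] upper[of "-2" True] range[of pf] by (cases pf) auto
  next
    fix pf assume "n mod 4 = 3"
    then have "4 dvd - 1 - int n" "1 < 2 * int ((n - 1) div 2) - int n + 4"
      "1 < 2 * int (n div 2) - int n + 4" by presburger+
    then show "?O pf = -1" using upper[of "-1" pf] range[of pf] by (cases pf) auto
  qed
qed

end
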